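(* Fix $\beta > 0$. For $\alpha > 0$ let $G_\alpha(s) = \frac{\beta}{\alpha}\exp(-\frac{\beta s}{\alpha})$ for $s \geq 0$ and $G_\alpha(s) = 0$ for $s < 0$. There exist constants $C > 0$ and $\epsilon_0 \in (0,1/2)$ such that for all $\alpha > 0$, all $\epsilon \in (0, \epsilon_0)$ and all $u \in \mathrm{H}^{1/2-\epsilon}(\mathbb{R})$: $$|G_\alpha \ast u|_{\mathrm{H}^{1/2}} \leq C \alpha^{-\epsilon} |u|_{\mathrm{H}^{1/2-\epsilon}},$$ i.e. the map $u \mapsto G_\alpha \ast u$ from $\mathrm{H}^{1/2-\epsilon}(\mathbb{R})$ to $\mathrm{H}^{1/2}(\mathbb{R})$ has norm of order $\alpha^{-\epsilon}$ for small $\epsilon$, uniformly in $\alpha$.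
   Context: For $s \in (0,1)$, $|u|_{\mathrm{H}^s}^2 = \int_{\mathbb{R}} |\xi|^{2s} |(\mathcal{F}u)(\xi)|^2\,\mathrm{d}\xi$, where $\mathcal{F}$ is the Fourier transform; $\ast$ denotes convolution on $\mathbb{R}$. *)

theory Defs
  imports "HOL-Analysis.Analysis"
begin

text \<open>Fourier transform convention:
  (F u)(xi) = integral of exp(-i x xi) u(x) dx; for u in L^2 it is the Plancherel
  transform, i.e. the L^2-limit of the truncated integrals over [-R,R].\<close>

definition is_L2 :: "(real \<Rightarrow> complex) \<Rightarrow> bool" where
  "is_L2 u \<longleftrightarrow> u \<in> borel_measurable lborel \<and> integrable lborel (\<lambda>x. (cmod (u x))\<^sup>2)"

definition fourier_trunc :: "(real \<Rightarrow> complex) \<Rightarrow> real \<Rightarrow> real \<Rightarrow> complex" where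
  "fourier_trunc u R \<xi> = (LINT x:{-R..R}|lborel. cis (- (x * \<xi>)) * u x)"

definition has_fourier_L2 :: "(real \<Rightarrow> complex) \<Rightarrow> (real \<Rightarrow> complex) \<Rightarrow> bool" where
  "has_fourier_L2 u F \<longleftrightarrow> F \<in> borel_measurable lborel \<and>
     ((\<lambda>R. \<integral>\<^sup>+ \<xi>. ennreal ((cmod (F \<xi> - fourier_trunc u R \<xi>))\<^sup>2) \<partial>lborel) \<longlongrightarrow> 0) at_top"

definition fourier_L2 :: "(real \<Rightarrow> complex) \<Rightarrow> real \<Rightarrow> complex" where
  "fourier_L2 u = (SOME F. has_fourier_L2 u F)"

definition Hs_seminorm_sq :: "real \<Rightarrow> (real \<Rightarrow> complex) \<Rightarrow> ennreal" where
  "Hs_seminorm_sq s u = (\<integral>\<^sup>+ \<xi>. ennreal (\<bar>\<xi>\<bar> powr (2 * s) * (cmod (fourier_L2 u \<xi>))\<^sup>2) \<partial>lborel)"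

definition in_Hs :: "real \<Rightarrow> (real \<Rightarrow> complex) \<Rightarrow> bool" where
  "in_Hs s u \<longleftrightarrow> is_L2 u \<and> Hs_seminorm_sq s u < \<infinity>"

definition G_kernel :: "real \<Rightarrow> real \<Rightarrow> real \<Rightarrow> real" where
  "G_kernel \<beta> \<alpha> s = (if s \<ge> 0 then \<beta> / \<alpha> * exp (- (\<beta> * s / \<alpha>)) else 0)"

definition convolution :: "(real \<Rightarrow> real) \<Rightarrow> (real \<Rightarrow> complex) \<Rightarrow> real \<Rightarrow> complex" where
  "convolution g u x = (\<integral> y. complex_of_real (g (x - y)) * u y \<partial>lborel)"

end

theory Submission
  imports Defs "HOL-Probability.Characteristic_Functions"
begin

text \<open>The Fourier transform of G_alpha is b/(b + i xi) with b = beta/alpha, so convolution with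
  G_alpha acts on the Fourier side as multiplication by a function m with
  |xi| |m xi|^2 = |xi| b^2/(b^2 + xi^2) <= b^(2 eps) |xi|^(1 - 2 eps), and
  b^(2 eps) <= max(1, beta)^2 alpha^(-2 eps).
  The real work is to justify this multiplier identity for the Plancherel transform: Plancherel's
  inequality for integrable functions (obtained with a Gaussian regularisation) makes the
  truncated transforms an L2-Cauchy family whose limit exists by completeness, and the transform
  of G_alpha * u is identified by comparing the truncations of u and of G_alpha * u.\<close>

hide_const (open) Convolution.convolution

section \<open>Fourier integral of integrable functions\<close>

definition fourier_integral :: "(real \<Rightarrow> complex) \<Rightarrow> real \<Rightarrow> complex" where
  "fourier_integral f \<xi> = (\<integral>x. cis (-(x*\<xi>)) * f x \<partial>lborel)"

definition L2_norm_sq :: "(real \<Rightarrow> complex) \<Rightarrow> ennreal" where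
  "L2_norm_sq f = (\<integral>\<^sup>+x. ennreal ((cmod (f x))\<^sup>2) \<partial>lborel)"

lemma borel_measurable_cis[measurable]: "cis \<in> borel_measurable borel"
  by (intro borel_measurable_continuous_onI continuous_intros)

lemma borel_measurable_cnj[measurable]: "cnj \<in> borel_measurable borel"
  by (intro borel_measurable_continuous_onI continuous_intros)

lemma borel_measurable_fourier_integral[measurable]:
  fixes f :: "real \<Rightarrow> complex"
  assumes [measurable]: "f \<in> borel_measurable borel"
  shows "fourier_integral f \<in> borel_measurable borel"
proof -
  have *: "(\<lambda>(\<xi>, x). cis (-(x*\<xi>)) * f x) \<in> borel_measurable (borel \<Otimes>\<^sub>M borel)"
    by measurable
  have "sets (borel \<Otimes>\<^sub>M lborel) = sets (borel \<Otimes>\<^sub>M (borel :: real measure))"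
    by (rule sets_pair_measure_cong) simp_all
  then have "(\<lambda>(\<xi>, x). cis (-(x*\<xi>)) * f x) \<in> borel_measurable (borel \<Otimes>\<^sub>M lborel)"
    using * by (simp cong: measurable_cong_sets)
  then show ?thesis unfolding fourier_integral_def
    by (rule lborel.borel_measurable_lebesgue_integral[of "\<lambda>\<xi> x. cis (-(x*\<xi>)) * f x", simplified])
qed

lemma norm_fourier_integral_le:
  fixes f :: "real \<Rightarrow> complex"
  shows "cmod (fourier_integral f \<xi>) \<le> (\<integral>x. cmod (f x) \<partial>lborel)"
  unfolding fourier_integral_def
  by (rule order.trans[OF integral_norm_bound]) (simp add: norm_mult)

lemma integrable_cis_mult:
  fixes g :: "real \<Rightarrow> complex"
  assumes g: "integrable lborel g"
  shows "integrable lborel (\<lambda>x. cis (-(x*\<xi>)) * g x)"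
proof -
  have [measurable]: "g \<in> borel_measurable borel" using g by auto
  show ?thesis
    by (rule Bochner_Integration.integrable_bound[OF g]) (auto simp: norm_mult)
qed

lemma fourier_integral_diff:
  fixes g h :: "real \<Rightarrow> complex"
  assumes g: "integrable lborel g" and h: "integrable lborel h"
  shows "fourier_integral (\<lambda>x. g x - h x) \<xi> = fourier_integral g \<xi> - fourier_integral h \<xi>"
  unfolding fourier_integral_def
  using integrable_cis_mult[OF g, of \<xi>] integrable_cis_mult[OF h, of \<xi>]
  by (simp add: right_diff_distrib)

lemma norm_integral_le_nn_integral:
  fixes f :: "'a \<Rightarrow> 'b::{banach, second_countable_topology}"
  shows "ennreal (norm (integral\<^sup>L M f)) \<le> (\<integral>\<^sup>+x. ennreal (norm (f x)) \<partial>M)"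
  by (cases "integrable M f") (simp_all add: integral_norm_bound_ennreal not_integrable_integral_eq)

lemma nn_integral_shift:
  fixes f :: "real \<Rightarrow> ennreal"
  assumes [measurable]: "f \<in> borel_measurable borel"
  shows "(\<integral>\<^sup>+x. f (x - y) \<partial>lborel) = (\<integral>\<^sup>+z. f z \<partial>lborel)"
  using nn_integral_real_affine[of f 1 "-y"] by simp

lemma nn_integral_reflect_shift:
  fixes f :: "real \<Rightarrow> ennreal"
  assumes [measurable]: "f \<in> borel_measurable borel"
  shows "(\<integral>\<^sup>+y. f (x - y) \<partial>lborel) = (\<integral>\<^sup>+z. f z \<partial>lborel)"
  using nn_integral_real_affine[of f "-1" x] by simp

lemma integrable_pair_norm_mult:
  fixes g h :: "real \<Rightarrow> complex"
  assumes g: "integrable lborel g" and h: "integrable lborel h"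
  shows "integrable (lborel \<Otimes>\<^sub>M lborel) (\<lambda>(a,b). cmod (g a) * cmod (h b))"
proof (rule integrableI_bounded)
  have [measurable]: "g \<in> borel_measurable borel" "h \<in> borel_measurable borel"
    using g h by auto
  show "(\<lambda>(a,b). cmod (g a) * cmod (h b)) \<in> borel_measurable (lborel \<Otimes>\<^sub>M lborel)" by measurable
  have "(\<integral>\<^sup>+ p. ennreal (norm ((\<lambda>(a,b). cmod (g a) * cmod (h b)) p)) \<partial>(lborel \<Otimes>\<^sub>M lborel))
      = (\<integral>\<^sup>+ a. \<integral>\<^sup>+ b. ennreal (cmod (g a)) * ennreal (cmod (h b)) \<partial>lborel \<partial>lborel)"
    by (subst lborel.nn_integral_fst[symmetric]) (auto simp: ennreal_mult)
  also have "\<dots> = (\<integral>\<^sup>+ a. ennreal (cmod (g a)) * (\<integral>\<^sup>+ b. ennreal (cmod (h b)) \<partial>lborel) \<partial>lborel)"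
    by (subst nn_integral_cmult) auto
  also have "\<dots> = (\<integral>\<^sup>+ a. ennreal (cmod (g a)) \<partial>lborel) * (\<integral>\<^sup>+ b. ennreal (cmod (h b)) \<partial>lborel)"
    by (subst mult.commute, subst nn_integral_cmult) (auto simp: mult.commute)
  also have "\<dots> < \<infinity>" using g h unfolding integrable_iff_bounded by (simp add: ennreal_mult_less_top)
  finally show "(\<integral>\<^sup>+ p. ennreal (norm ((\<lambda>(a,b). cmod (g a) * cmod (h b)) p)) \<partial>(lborel \<Otimes>\<^sub>M lborel)) < \<infinity>" .
qed

lemma integral_mult_bounded_kernel_swap:
  fixes g h :: "real \<Rightarrow> complex" and k :: "real \<Rightarrow> real \<Rightarrow> complex"
  assumes g: "integrable lborel g" and h: "integrable lborel h"
    and [measurable]: "case_prod k \<in> borel_measurable (lborel \<Otimes>\<^sub>M lborel)"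
    and k_bounded: "\<And>a b. cmod (k a b) \<le> 1"
  shows "(\<integral>a. g a * (\<integral>b. k a b * h b \<partial>lborel) \<partial>lborel)
       = (\<integral>b. h b * (\<integral>a. k a b * g a \<partial>lborel) \<partial>lborel)"
proof -
  have [measurable]: "g \<in> borel_measurable borel" "h \<in> borel_measurable borel"
    using g h by auto
  have "integrable (lborel \<Otimes>\<^sub>M lborel) (case_prod (\<lambda>a b. g a * k a b * h b))"
  proof (rule Bochner_Integration.integrable_bound[OF integrable_pair_norm_mult[OF g h]])
    show "case_prod (\<lambda>a b. g a * k a b * h b) \<in> borel_measurable (lborel \<Otimes>\<^sub>M lborel)"
      by measurable
    have "cmod (g a * k a b * h b) \<le> cmod (g a) * cmod (h b)" for a b
      using mult_left_mono[OF k_bounded[of a b], of "cmod (g a)"]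
      by (auto simp: norm_mult intro: mult_right_mono[of _ "cmod (g a)" "cmod (h b)", simplified])
    then show "AE p in lborel \<Otimes>\<^sub>M lborel. norm (case_prod (\<lambda>a b. g a * k a b * h b) p)
        \<le> norm ((\<lambda>(a,b). cmod (g a) * cmod (h b)) p)"
      by (auto split: prod.splits)
  qed
  then have "(\<integral>b. (\<integral>a. g a * k a b * h b \<partial>lborel) \<partial>lborel)
      = (\<integral>a. (\<integral>b. g a * k a b * h b \<partial>lborel) \<partial>lborel)"
    by (rule lborel_pair.Fubini_integral)
  moreover have "(\<integral>a. g a * k a b * h b \<partial>lborel) = h b * (\<integral>a. k a b * g a \<partial>lborel)" for b
  proof -
    have "(\<integral>a. g a * k a b * h b \<partial>lborel) = (\<integral>a. h b * (k a b * g a) \<partial>lborel)"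
      by (simp add: ac_simps)
    then show ?thesis by simp
  qed
  ultimately show ?thesis
    by (simp add: mult.assoc)
qed

section \<open>Plancherel's inequality\<close>

lemma integral_cis_gaussian:
  assumes s: "s > 0"
  shows "(\<integral>\<xi>. cis (-(z*\<xi>)) * complex_of_real (exp (-(s*\<xi>)\<^sup>2/2)) \<partial>lborel)
     = complex_of_real (2*pi * normal_density 0 s z)"
proof -
  have c: "char std_normal_distribution (-z/s) = complex_of_real (exp(-((-z/s)\<^sup>2)/2))"
    using char_std_normal_distribution by simp
  have c2: "char std_normal_distribution (-z/s)
      = (\<integral>x. std_normal_density x *\<^sub>R iexp (-z/s * x) \<partial>lborel)"
    unfolding char_def by (subst integral_density) auto
  have "(\<integral>\<xi>. cis (-(z*\<xi>)) * complex_of_real (exp (-(s*\<xi>)\<^sup>2/2)) \<partial>lborel)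
     = \<bar>1/s\<bar> *\<^sub>R (\<integral>x. cis (-(z*(0 + 1/s*x))) * complex_of_real (exp (-(s*(0+1/s*x))\<^sup>2/2)) \<partial>lborel)"
    by (rule lborel_integral_real_affine) (use s in simp)
  also have "(\<lambda>x. cis (-(z*(0 + 1/s*x))) * complex_of_real (exp (-(s*(0+1/s*x))\<^sup>2/2)))
      = (\<lambda>x. complex_of_real (sqrt (2*pi)) * (std_normal_density x *\<^sub>R iexp (-z/s * x)))"
    using s by (auto simp: std_normal_density_def cis_conv_exp fun_eq_iff scaleR_conv_of_real)
  also have "(\<integral>x. complex_of_real (sqrt (2*pi)) * (std_normal_density x *\<^sub>R iexp (-z/s * x)) \<partial>lborel)
     = complex_of_real (sqrt (2*pi)) * char std_normal_distribution (-z/s)"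
    unfolding c2 by (rule integral_mult_right_zero)
  also have "\<dots> = complex_of_real (sqrt (2*pi)) * complex_of_real (exp(-((-z/s)\<^sup>2)/2))"
    by (simp only: c)
  also have "\<bar>1/s\<bar> *\<^sub>R (complex_of_real (sqrt (2*pi)) * complex_of_real (exp(-((-z/s)\<^sup>2)/2)))
     = complex_of_real (2*pi * normal_density 0 s z)"
  proof -
    have e: "exp(-((-z/s)\<^sup>2)/2) = exp (-(z - 0)\<^sup>2/ (2 * s\<^sup>2))" by (simp add: power_divide)
    have h: "sqrt (2*pi) / s = 2*pi * (1 / sqrt (2 * pi * s\<^sup>2))" using s
      by (simp add: real_sqrt_mult field_simps)
    have "\<bar>1/s\<bar> * (sqrt (2*pi) * exp(-((-z/s)\<^sup>2)/2)) = 2*pi * normal_density 0 s z"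
      unfolding e normal_density_def using s h by (simp add: field_simps)
    then show ?thesis by (simp add: scaleR_conv_of_real flip: of_real_mult of_real_divide)
  qed
  finally show ?thesis .
qed

lemma integrable_gaussian:
  fixes s :: real
  assumes s: "s > 0"
  shows "integrable lborel (\<lambda>\<xi>. exp (-(s*\<xi>)\<^sup>2/2))"
proof -
  have "integrable lborel (\<lambda>x. sqrt (2*pi) * std_normal_density (0 + s * x))"
    using s by (intro lborel_integrable_real_affine integrable_mult_right) auto
  moreover have "(\<lambda>x. sqrt (2*pi) * std_normal_density (0 + s * x)) = (\<lambda>\<xi>. exp (-(s*\<xi>)\<^sup>2/2))"
    by (auto simp: std_normal_density_def fun_eq_iff)
  ultimately show ?thesis by metis
qed

lemma nn_integral_normal_density:
  assumes "s > 0"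
  shows "(\<integral>\<^sup>+z. ennreal (normal_density \<mu> s z) \<partial>lborel) = 1"
  using assms by (subst nn_integral_eq_integral) auto

lemma nn_integral_Schur_test:
  fixes f :: "real \<Rightarrow> complex" and K :: "real \<Rightarrow> real"
  assumes [measurable]: "f \<in> borel_measurable borel" "K \<in> borel_measurable borel"
    and K_nonneg: "\<And>z. 0 \<le> K z"
  shows "(\<integral>\<^sup>+x. ennreal (cmod (f x)) * (\<integral>\<^sup>+y. ennreal (cmod (f y) * K (x - y)) \<partial>lborel) \<partial>lborel)
      \<le> (\<integral>\<^sup>+z. ennreal (K z) \<partial>lborel) * L2_norm_sq f"
    (is "?lhs \<le> ?I * _")
proof -
  define T1 where "T1 x y = ennreal ((cmod (f x))\<^sup>2 * K (x - y))" for x y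
  define T2 where "T2 x y = ennreal ((cmod (f y))\<^sup>2 * K (x - y))" for x y
  have [measurable]: "case_prod T1 \<in> borel_measurable (lborel \<Otimes>\<^sub>M lborel)"
    unfolding T1_def by measurable
  have [measurable]: "case_prod T2 \<in> borel_measurable (lborel \<Otimes>\<^sub>M lborel)"
    unfolding T2_def by measurable
  have amgm: "2 * (ennreal (cmod (f x)) * ennreal (cmod (f y) * K (x - y))) \<le> T1 x y + T2 x y"
    for x y
  proof -
    have "2 * cmod (f x) * cmod (f y) \<le> (cmod (f x))\<^sup>2 + (cmod (f y))\<^sup>2"
      using sum_squares_bound[of "cmod (f x)" "cmod (f y)"] by simp
    then have "(2 * cmod (f x) * cmod (f y)) * K (x - y) \<le> ((cmod (f x))\<^sup>2 + (cmod (f y))\<^sup>2) * K (x - y)"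
      by (rule mult_right_mono[OF _ K_nonneg])
    moreover have "2 * (ennreal (cmod (f x)) * ennreal (cmod (f y) * K (x - y)))
        = ennreal (2 * cmod (f x) * cmod (f y) * K (x - y))"
      using K_nonneg[of "x - y"] by (simp add: ennreal_mult mult.assoc)
    ultimately show ?thesis
      unfolding T1_def T2_def using K_nonneg[of "x - y"]
      by (simp add: ennreal_plus[symmetric] ennreal_leI distrib_right del: ennreal_plus)
  qed
  have shift: "(\<integral>\<^sup>+x. ennreal (K (x - y)) \<partial>lborel) = ?I"
    and reflect_shift: "(\<integral>\<^sup>+y. ennreal (K (x - y)) \<partial>lborel) = ?I" for x y
    using nn_integral_shift[of "\<lambda>z. ennreal (K z)" y] nn_integral_reflect_shift[of "\<lambda>z. ennreal (K z)" x]
    by simp_all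
  have "2 * ?lhs = (\<integral>\<^sup>+x. \<integral>\<^sup>+y. 2 * (ennreal (cmod (f x)) * ennreal (cmod (f y) * K (x - y))) \<partial>lborel \<partial>lborel)"
    by (simp add: nn_integral_cmult[symmetric])
  also have "\<dots> \<le> (\<integral>\<^sup>+x. \<integral>\<^sup>+y. T1 x y + T2 x y \<partial>lborel \<partial>lborel)"
    by (intro nn_integral_mono amgm)
  also have "\<dots> = (\<integral>\<^sup>+x. \<integral>\<^sup>+y. T1 x y \<partial>lborel \<partial>lborel) + (\<integral>\<^sup>+x. \<integral>\<^sup>+y. T2 x y \<partial>lborel \<partial>lborel)"
    by (subst nn_integral_add[symmetric]) (auto intro!: nn_integral_cong nn_integral_add)
  also have "(\<integral>\<^sup>+x. \<integral>\<^sup>+y. T2 x y \<partial>lborel \<partial>lborel) = (\<integral>\<^sup>+y. \<integral>\<^sup>+x. T2 x y \<partial>lborel \<partial>lborel)"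
    by (rule lborel_pair.Fubini'[symmetric]) simp
  also have "(\<integral>\<^sup>+x. \<integral>\<^sup>+y. T1 x y \<partial>lborel \<partial>lborel) = ?I * L2_norm_sq f"
    unfolding T1_def L2_norm_sq_def using K_nonneg
    by (simp add: ennreal_mult nn_integral_cmult reflect_shift nn_integral_multc[symmetric]
        mult.commute[of ?I])
  also have "(\<integral>\<^sup>+y. \<integral>\<^sup>+x. T2 x y \<partial>lborel \<partial>lborel) = ?I * L2_norm_sq f"
    unfolding T2_def L2_norm_sq_def using K_nonneg
    by (simp add: ennreal_mult nn_integral_cmult shift nn_integral_multc[symmetric]
        mult.commute[of ?I])
  finally have "2 * ?lhs \<le> 2 * (?I * L2_norm_sq f)"
    by (simp add: mult_2)
  then show ?thesis
    by (simp add: ennreal_mult_le_mult_iff)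
qed

lemma norm_integral_cis_cnj_fourier_gaussian_le:
  fixes f :: "real \<Rightarrow> complex"
  assumes f: "integrable lborel f" and s: "s > 0"
  shows "ennreal (cmod (\<integral>\<xi>. cis (-(x*\<xi>)) * (cnj (fourier_integral f \<xi>)
      * complex_of_real (exp (-(s*\<xi>)\<^sup>2/2))) \<partial>lborel))
    \<le> (\<integral>\<^sup>+y. ennreal (cmod (f y) * (2*pi * normal_density 0 s (x - y))) \<partial>lborel)"
proof -
  define w where "w \<xi> = exp (-(s*\<xi>)\<^sup>2/2)" for \<xi>
  have [measurable]: "f \<in> borel_measurable borel" using f by auto
  have "integrable lborel w" unfolding w_def by (rule integrable_gaussian[OF s])
  then have "integrable lborel (\<lambda>\<xi>. cis (-(x*\<xi>)) * complex_of_real (w \<xi>))"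
    by (rule Bochner_Integration.integrable_bound) (auto simp: norm_mult w_def)
  moreover have "integrable lborel (\<lambda>y. cnj (f y))" using f by simp
  moreover have "cnj (fourier_integral f \<xi>) = (\<integral>y. cis (y*\<xi>) * cnj (f y) \<partial>lborel)" for \<xi>
    unfolding fourier_integral_def
    by (subst Bochner_Integration.integral_cnj[symmetric]) (simp add: cis_cnj)
  ultimately have "(\<integral>\<xi>. cis (-(x*\<xi>)) * (cnj (fourier_integral f \<xi>) * complex_of_real (w \<xi>)) \<partial>lborel)
      = (\<integral>y. cnj (f y) * (\<integral>\<xi>. cis (y*\<xi>) * (cis (-(x*\<xi>)) * complex_of_real (w \<xi>)) \<partial>lborel) \<partial>lborel)"
    by (subst integral_mult_bounded_kernel_swap[symmetric]) (auto simp: ac_simps measurable_lborel1)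
  also have "\<dots> = (\<integral>y. cnj (f y) * complex_of_real (2*pi * normal_density 0 s (x - y)) \<partial>lborel)"
  proof (rule Bochner_Integration.integral_cong[OF refl])
    fix y
    have "(\<integral>\<xi>. cis (y*\<xi>) * (cis (-(x*\<xi>)) * complex_of_real (w \<xi>)) \<partial>lborel)
        = (\<integral>\<xi>. cis (-((x-y)*\<xi>)) * complex_of_real (exp (-(s*\<xi>)\<^sup>2/2)) \<partial>lborel)"
      by (simp add: w_def mult.assoc[symmetric] cis_mult algebra_simps)
    also have "\<dots> = complex_of_real (2*pi * normal_density 0 s (x - y))"
      by (rule integral_cis_gaussian[OF s])
    finally show "cnj (f y) * (\<integral>\<xi>. cis (y*\<xi>) * (cis (-(x*\<xi>)) * complex_of_real (w \<xi>)) \<partial>lborel)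
        = cnj (f y) * complex_of_real (2*pi * normal_density 0 s (x - y))"
      by simp
  qed
  finally show ?thesis unfolding w_def
    by (simp add: norm_integral_le_nn_integral[THEN order.trans] norm_mult)
qed

text \<open>The Gaussian weight makes every integral below absolutely convergent, so that
  |F f|^2 w can be unfolded into a double integral of f against f convolved with the
  Fourier transform of w, a Gaussian of total mass 2 pi.\<close>
lemma plancherel_gaussian_weighted:
  fixes f :: "real \<Rightarrow> complex" and s :: real
  assumes f: "integrable lborel f" and s: "s > 0"
  shows "(\<integral>\<^sup>+\<xi>. ennreal ((cmod (fourier_integral f \<xi>))\<^sup>2 * exp (-(s*\<xi>)\<^sup>2/2)) \<partial>lborel)
    \<le> ennreal (2*pi) * L2_norm_sq f"
proof -
  define w where "w \<xi> = exp (-(s*\<xi>)\<^sup>2/2)" for \<xi>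
  define L where "L = (\<integral>x. cmod (f x) \<partial>lborel)"
  define G where "G z = 2*pi * normal_density 0 s z" for z
  define \<phi> where "\<phi> \<xi> = cnj (fourier_integral f \<xi>) * complex_of_real (w \<xi>)" for \<xi>
  define \<psi> where "\<psi> x = (\<integral>\<xi>. cis (-(x*\<xi>)) * \<phi> \<xi> \<partial>lborel)" for x
  have [measurable]: "f \<in> borel_measurable borel" "w \<in> borel_measurable borel"
    "G \<in> borel_measurable borel" "\<phi> \<in> borel_measurable borel"
    using f unfolding w_def G_def \<phi>_def by auto
  have w_int: "integrable lborel w" unfolding w_def by (rule integrable_gaussian[OF s])
  have w_nonneg: "0 \<le> w \<xi>" for \<xi> unfolding w_def by simp
  have F_le: "cmod (fourier_integral f \<xi>) \<le> L" for \<xi>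
    unfolding L_def by (rule norm_fourier_integral_le)
  have "L \<ge> 0" unfolding L_def by simp
  have \<phi>_int: "integrable lborel \<phi>"
    by (rule Bochner_Integration.integrable_bound[of _ "\<lambda>\<xi>. L * w \<xi>"])
      (use w_int w_nonneg F_le \<open>L \<ge> 0\<close> in \<open>auto simp: \<phi>_def norm_mult intro!: mult_right_mono\<close>)
  have sq_int: "integrable lborel (\<lambda>\<xi>. (cmod (fourier_integral f \<xi>))\<^sup>2 * w \<xi>)"
    by (rule Bochner_Integration.integrable_bound[of _ "\<lambda>\<xi>. L\<^sup>2 * w \<xi>"])
      (use w_int w_nonneg F_le \<open>L \<ge> 0\<close> in \<open>auto simp: abs_mult intro!: mult_right_mono power_mono\<close>)
  have F_\<phi>: "(\<lambda>\<xi>. fourier_integral f \<xi> * \<phi> \<xi>)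
      = (\<lambda>\<xi>. complex_of_real ((cmod (fourier_integral f \<xi>))\<^sup>2 * w \<xi>))"
    by (auto simp: \<phi>_def fun_eq_iff mult.assoc simp flip: complex_norm_square)
  have "(\<integral>\<^sup>+\<xi>. ennreal ((cmod (fourier_integral f \<xi>))\<^sup>2 * w \<xi>) \<partial>lborel)
      = ennreal (\<integral>\<xi>. (cmod (fourier_integral f \<xi>))\<^sup>2 * w \<xi> \<partial>lborel)"
    using sq_int w_nonneg by (intro nn_integral_eq_integral) auto
  also have "\<dots> = ennreal (cmod (\<integral>\<xi>. fourier_integral f \<xi> * \<phi> \<xi> \<partial>lborel))"
    unfolding F_\<phi> integral_complex_of_real norm_of_real
    using w_nonneg by (simp add: integral_nonneg_AE)
  also have "(\<integral>\<xi>. fourier_integral f \<xi> * \<phi> \<xi> \<partial>lborel) = (\<integral>x. f x * \<psi> x \<partial>lborel)"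
    unfolding fourier_integral_def \<psi>_def
    using integral_mult_bounded_kernel_swap[OF \<phi>_int f, of "\<lambda>\<xi> x. cis (-(x*\<xi>))"]
    by (simp add: mult.commute measurable_lborel1)
  also have "ennreal (cmod \<dots>) \<le> (\<integral>\<^sup>+x. ennreal (cmod (f x * \<psi> x)) \<partial>lborel)"
    by (rule norm_integral_le_nn_integral)
  also have "\<dots> \<le> (\<integral>\<^sup>+x. ennreal (cmod (f x)) * (\<integral>\<^sup>+y. ennreal (cmod (f y) * G (x - y)) \<partial>lborel) \<partial>lborel)"
  proof -
    have "ennreal (cmod (\<psi> x)) \<le> (\<integral>\<^sup>+y. ennreal (cmod (f y) * G (x - y)) \<partial>lborel)" for x
      unfolding \<psi>_def \<phi>_def w_def G_def by (rule norm_integral_cis_cnj_fourier_gaussian_le[OF f s])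
    then show ?thesis
      by (intro nn_integral_mono) (auto simp: norm_mult ennreal_mult intro!: mult_left_mono)
  qed
  also have "\<dots> \<le> (\<integral>\<^sup>+z. ennreal (G z) \<partial>lborel) * L2_norm_sq f"
    by (rule nn_integral_Schur_test) (auto simp: G_def)
  also have "(\<integral>\<^sup>+z. ennreal (G z) \<partial>lborel) = ennreal (2*pi)"
    using s by (simp add: G_def ennreal_mult nn_integral_cmult nn_integral_normal_density)
  finally show ?thesis unfolding w_def .
qed

lemma L2_norm_sq_fourier_integral_le:
  fixes f :: "real \<Rightarrow> complex"
  assumes f: "integrable lborel f"
  shows "L2_norm_sq (fourier_integral f) \<le> ennreal (2*pi) * L2_norm_sq f"
proof -
  have [measurable]: "f \<in> borel_measurable borel" using f by auto
  define u where "u n \<xi> = ennreal ((cmod (fourier_integral f \<xi>))\<^sup>2 * exp (-(inverse (real (Suc n))*\<xi>)\<^sup>2/2))"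
    for n \<xi>
  have u_measurable: "u n \<in> borel_measurable lborel" for n unfolding u_def by measurable
  have lim: "(\<lambda>n. u n \<xi>) \<longlonglongrightarrow> ennreal ((cmod (fourier_integral f \<xi>))\<^sup>2)" for \<xi>
  proof -
    have "(\<lambda>n. (cmod (fourier_integral f \<xi>))\<^sup>2 * exp (-(inverse (real (Suc n))*\<xi>)\<^sup>2/2))
        \<longlonglongrightarrow> (cmod (fourier_integral f \<xi>))\<^sup>2 * exp (-(0*\<xi>)\<^sup>2/2)"
      by (intro tendsto_intros LIMSEQ_inverse_real_of_nat) simp
    then show ?thesis unfolding u_def by (intro tendsto_ennrealI) (simp add: power2_eq_square)
  qed
  have "L2_norm_sq (fourier_integral f) = (\<integral>\<^sup>+\<xi>. liminf (\<lambda>n. u n \<xi>) \<partial>lborel)"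
    unfolding L2_norm_sq_def by (intro nn_integral_cong) (simp add: lim_imp_Liminf[OF _ lim])
  also have "\<dots> \<le> liminf (\<lambda>n. integral\<^sup>N lborel (u n))"
    by (rule nn_integral_liminf[OF u_measurable])
  also have "\<dots> \<le> limsup (\<lambda>n. integral\<^sup>N lborel (u n))"
    by (rule Liminf_le_Limsup) simp
  also have "\<dots> \<le> ennreal (2*pi) * L2_norm_sq f"
    unfolding u_def
    by (intro Limsup_bounded always_eventually allI plancherel_gaussian_weighted[OF f]) simp
  finally show ?thesis .
qed

section \<open>Squared L2 distances and the Plancherel transform\<close>

lemma norm_add_sq_le:
  fixes a b :: "'a::real_normed_vector"
  shows "(norm (a + b))\<^sup>2 \<le> 2 * (norm a)\<^sup>2 + 2 * (norm b)\<^sup>2"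
proof -
  have "(norm (a + b))\<^sup>2 \<le> (norm a + norm b)\<^sup>2"
    by (simp add: power_mono norm_triangle_ineq)
  also have "\<dots> \<le> 2 * (norm a)\<^sup>2 + 2 * (norm b)\<^sup>2"
    using sum_squares_bound[of "norm a" "norm b"] by (simp add: power2_sum)
  finally show ?thesis .
qed

lemma L2_norm_sq_add_le:
  fixes f g :: "real \<Rightarrow> complex"
  assumes [measurable]: "f \<in> borel_measurable borel" "g \<in> borel_measurable borel"
  shows "L2_norm_sq (\<lambda>x. f x + g x) \<le> 2 * L2_norm_sq f + 2 * L2_norm_sq g"
proof -
  have "L2_norm_sq (\<lambda>x. f x + g x)
      \<le> (\<integral>\<^sup>+x. 2 * ennreal ((cmod (f x))\<^sup>2) + 2 * ennreal ((cmod (g x))\<^sup>2) \<partial>lborel)"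
    unfolding L2_norm_sq_def
  proof (intro nn_integral_mono)
    fix x
    have "ennreal ((cmod (f x + g x))\<^sup>2) \<le> ennreal (2 * (cmod (f x))\<^sup>2 + 2 * (cmod (g x))\<^sup>2)"
      by (rule ennreal_leI[OF norm_add_sq_le])
    then show "ennreal ((cmod (f x + g x))\<^sup>2)
        \<le> 2 * ennreal ((cmod (f x))\<^sup>2) + 2 * ennreal ((cmod (g x))\<^sup>2)"
      by (simp add: ennreal_plus ennreal_mult)
  qed
  also have "\<dots> = 2 * L2_norm_sq f + 2 * L2_norm_sq g"
    unfolding L2_norm_sq_def by (subst nn_integral_add) (auto simp: nn_integral_cmult)
  finally show ?thesis .
qed

lemma L2_norm_sq_diff_commute: "L2_norm_sq (\<lambda>x. f x - g x) = L2_norm_sq (\<lambda>x. g x - f x)"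
  unfolding L2_norm_sq_def by (simp add: norm_minus_commute)

lemma L2_norm_sq_diff_triangle:
  fixes f g h :: "real \<Rightarrow> complex"
  assumes [measurable]: "f \<in> borel_measurable borel" "g \<in> borel_measurable borel"
    "h \<in> borel_measurable borel"
  shows "L2_norm_sq (\<lambda>x. f x - h x)
    \<le> 2 * L2_norm_sq (\<lambda>x. f x - g x) + 2 * L2_norm_sq (\<lambda>x. g x - h x)"
  using L2_norm_sq_add_le[of "\<lambda>x. f x - g x" "\<lambda>x. g x - h x"] by simp

lemma is_L2_iff: "is_L2 u \<longleftrightarrow> u \<in> borel_measurable borel \<and> L2_norm_sq u < \<infinity>"
  unfolding is_L2_def L2_norm_sq_def integrable_iff_bounded by auto

lemma L2_limit_unique_AE:
  fixes F F' :: "real \<Rightarrow> complex" and t :: "real \<Rightarrow> real \<Rightarrow> complex"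
  assumes [measurable]: "F \<in> borel_measurable borel" "F' \<in> borel_measurable borel"
    "\<And>R. t R \<in> borel_measurable borel"
    and lim: "((\<lambda>R. L2_norm_sq (\<lambda>x. F x - t R x)) \<longlongrightarrow> 0) at_top"
    and lim': "((\<lambda>R. L2_norm_sq (\<lambda>x. F' x - t R x)) \<longlongrightarrow> 0) at_top"
  shows "AE x in lborel. F x = F' x"
proof -
  have le: "L2_norm_sq (\<lambda>x. F x - F' x)
      \<le> 2 * L2_norm_sq (\<lambda>x. F x - t R x) + 2 * L2_norm_sq (\<lambda>x. F' x - t R x)" for R
    using L2_norm_sq_diff_triangle[of F "t R" F'] L2_norm_sq_diff_commute[of "t R" F'] by simp
  have "((\<lambda>R. 2 * L2_norm_sq (\<lambda>x. F x - t R x) + 2 * L2_norm_sq (\<lambda>x. F' x - t R x))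
      \<longlongrightarrow> 2 * 0 + 2 * 0) at_top"
    by (intro tendsto_intros lim lim') auto
  then have "L2_norm_sq (\<lambda>x. F x - F' x) \<le> 0"
    by (intro tendsto_le[OF _ _ tendsto_const]) (auto simp: le)
  then have "L2_norm_sq (\<lambda>x. F x - F' x) = 0"
    by simp
  then have "AE x in lborel. ennreal ((cmod (F x - F' x))\<^sup>2) = 0"
    unfolding L2_norm_sq_def by (subst nn_integral_0_iff_AE[symmetric]) auto
  then show ?thesis by eventually_elim simp
qed

lemma integrable_scaleR_square_integrable:
  fixes g :: "real \<Rightarrow> real" and u :: "real \<Rightarrow> complex"
  assumes [measurable]: "g \<in> borel_measurable borel" "u \<in> borel_measurable borel"
    and g: "integrable lborel (\<lambda>x. (g x)\<^sup>2)" and u: "integrable lborel (\<lambda>x. (cmod (u x))\<^sup>2)"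
  shows "integrable lborel (\<lambda>x. g x *\<^sub>R u x)"
proof (rule Bochner_Integration.integrable_bound[of _ "\<lambda>x. (g x)\<^sup>2 + (cmod (u x))\<^sup>2"])
  show "integrable lborel (\<lambda>x. (g x)\<^sup>2 + (cmod (u x))\<^sup>2)"
    using g u by (rule Bochner_Integration.integrable_add)
  have "\<bar>g x\<bar> * cmod (u x) \<le> (g x)\<^sup>2 + (cmod (u x))\<^sup>2" for x
  proof -
    have "2 * (\<bar>g x\<bar> * cmod (u x)) \<le> (g x)\<^sup>2 + (cmod (u x))\<^sup>2"
      using sum_squares_bound[of "\<bar>g x\<bar>" "cmod (u x)"] by (simp add: mult.assoc)
    moreover have "0 \<le> \<bar>g x\<bar> * cmod (u x)" by simp
    ultimately show ?thesis by linarith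
  qed
  then show "AE x in lborel. norm (g x *\<^sub>R u x) \<le> norm ((g x)\<^sup>2 + (cmod (u x))\<^sup>2)"
    by simp
qed simp

definition truncate :: "real \<Rightarrow> (real \<Rightarrow> complex) \<Rightarrow> real \<Rightarrow> complex" where
  "truncate R u x = indicator {-R..R} x *\<^sub>R u x"

lemma borel_measurable_truncate[measurable]:
  "u \<in> borel_measurable borel \<Longrightarrow> truncate R u \<in> borel_measurable borel"
  unfolding truncate_def by measurable

lemma integrable_truncate:
  assumes "is_L2 u"
  shows "integrable lborel (truncate R u)"
proof -
  have "(\<lambda>x. (indicator {-R..R} x :: real)\<^sup>2) = indicator {-R..R}"
    by (auto simp: indicator_def fun_eq_iff)
  then show ?thesis
    using assms unfolding is_L2_def truncate_def
    by (intro integrable_scaleR_square_integrable) (auto, cases "-R \<le> R", auto)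
qed

lemma is_L2_truncate:
  assumes "is_L2 u"
  shows "is_L2 (truncate R u)"
proof -
  have "L2_norm_sq (truncate R u) \<le> L2_norm_sq u"
    unfolding L2_norm_sq_def truncate_def by (intro nn_integral_mono) (auto simp: indicator_def)
  then show ?thesis using assms unfolding is_L2_iff by auto
qed

lemma L2_norm_sq_truncate_tendsto_0:
  assumes u: "is_L2 u"
  shows "((\<lambda>R. L2_norm_sq (\<lambda>x. u x - truncate R u x)) \<longlongrightarrow> 0) at_top"
proof -
  have [measurable]: "u \<in> borel_measurable borel"
    and u_int: "integrable lborel (\<lambda>x. (cmod (u x))\<^sup>2)"
    using u unfolding is_L2_def by simp_all
  define s where "s R x = (cmod (u x))\<^sup>2 * (1 - indicator {-R..R} x)" for R x
  have [measurable]: "s R \<in> borel_measurable borel" for R unfolding s_def by measurable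
  have s_bounds: "0 \<le> s R x" "s R x \<le> (cmod (u x))\<^sup>2" for R x
    unfolding s_def by (auto simp: indicator_def)
  have "L2_norm_sq (\<lambda>x. u x - truncate R u x) = ennreal (\<integral>x. s R x \<partial>lborel)" for R
  proof -
    have "integrable lborel (s R)"
      by (rule Bochner_Integration.integrable_bound[OF u_int]) (use s_bounds in auto)
    then show ?thesis
      unfolding L2_norm_sq_def using s_bounds
      by (subst nn_integral_eq_integral[symmetric])
        (auto intro!: nn_integral_cong simp: s_def truncate_def indicator_def)
  qed
  moreover have "((\<lambda>R. \<integral>x. s R x \<partial>lborel) \<longlongrightarrow> 0) at_top"
  proof -
    have "AE x in lborel. ((\<lambda>R. s R x) \<longlongrightarrow> 0) at_top"
    proof (rule AE_I2)
      fix x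
      have "eventually (\<lambda>R. s R x = 0) at_top"
        using eventually_ge_at_top[of "\<bar>x\<bar>"] by eventually_elim (auto simp: s_def indicator_def)
      then show "((\<lambda>R. s R x) \<longlongrightarrow> 0) at_top" by (rule tendsto_eventually)
    qed
    moreover have "\<forall>\<^sub>F R in at_top. AE x in lborel. norm (s R x) \<le> (cmod (u x))\<^sup>2"
      using s_bounds by auto
    ultimately show ?thesis
      using integral_dominated_convergence_at_top[of "\<lambda>x. 0" lborel s, OF _ _ u_int] by simp
  qed
  then have "((\<lambda>R. ennreal (\<integral>x. s R x \<partial>lborel)) \<longlongrightarrow> ennreal 0) at_top"
    by (intro tendsto_ennrealI) simp
  ultimately show ?thesis by simp
qed

lemma fourier_trunc_eq_fourier_integral:
  "fourier_trunc u R = fourier_integral (truncate R u)"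
  unfolding fourier_trunc_def fourier_integral_def set_lebesgue_integral_def truncate_def
  by (auto intro!: Bochner_Integration.integral_cong simp: indicator_def fun_eq_iff)

lemma L2_norm_sq_mult_le:
  assumes "\<And>\<xi>. cmod (m \<xi>) \<le> 1"
  shows "L2_norm_sq (\<lambda>\<xi>. m \<xi> * f \<xi> - m \<xi> * g \<xi>) \<le> L2_norm_sq (\<lambda>\<xi>. f \<xi> - g \<xi>)"
  unfolding L2_norm_sq_def
proof (intro nn_integral_mono ennreal_leI)
  fix \<xi>
  have "(cmod (m \<xi> * f \<xi> - m \<xi> * g \<xi>))\<^sup>2 = (cmod (m \<xi>))\<^sup>2 * (cmod (f \<xi> - g \<xi>))\<^sup>2"
    by (simp add: norm_mult power_mult_distrib right_diff_distrib[symmetric])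
  also have "\<dots> \<le> 1 * (cmod (f \<xi> - g \<xi>))\<^sup>2"
    using assms[of \<xi>] by (intro mult_right_mono) (auto simp: power_le_one)
  finally show "(cmod (m \<xi> * f \<xi> - m \<xi> * g \<xi>))\<^sup>2 \<le> (cmod (f \<xi> - g \<xi>))\<^sup>2"
    by simp
qed

lemma abs_le_pow2_square:
  fixes h :: real
  shows "\<bar>h\<bar> \<le> (2^k * h\<^sup>2 + (1/2)^k) / 2"
proof -
  have "0 \<le> (2^k * \<bar>h\<bar> - 1)\<^sup>2 / (2::real)^k" by simp
  also have "(2^k * \<bar>h\<bar> - 1)\<^sup>2 / (2::real)^k = 2^k * h\<^sup>2 - 2 * \<bar>h\<bar> + (1/2)^k"
    by (simp add: field_simps power2_eq_square power_one_over)
  finally show ?thesis by simp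
qed

lemma AE_convergent_of_L2_fast_Cauchy:
  fixes f :: "nat \<Rightarrow> real \<Rightarrow> complex"
  assumes [measurable]: "\<And>n. f n \<in> borel_measurable borel"
    and increments: "\<And>k. L2_norm_sq (\<lambda>x. f (Suc k) x - f k x) \<le> ennreal (d k)"
    and d_nonneg: "\<And>k. 0 \<le> d k" and summable: "summable (\<lambda>k. 2^k * d k)"
  shows "AE x in lborel. convergent (\<lambda>n. f n x)"
proof -
  define h where "h k x = f (Suc k) x - f k x" for k x
  have [measurable]: "h k \<in> borel_measurable borel" for k unfolding h_def by measurable
  define M where "M x = (\<Sum>k. ennreal (2^k * (cmod (h k x))\<^sup>2))" for x
  have [measurable]: "M \<in> borel_measurable lborel" unfolding M_def by measurable
  have "(\<integral>\<^sup>+x. M x \<partial>lborel) = (\<Sum>k. ennreal (2^k) * L2_norm_sq (h k))"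
    unfolding M_def L2_norm_sq_def
    by (subst nn_integral_suminf) (auto simp: ennreal_mult nn_integral_cmult)
  also have "\<dots> \<le> (\<Sum>k. ennreal (2^k * d k))"
    using increments unfolding h_def
    by (intro suminf_le) (auto simp: ennreal_mult' intro!: mult_left_mono)
  also have "\<dots> < \<infinity>"
    using summable d_nonneg by (simp add: suminf_ennreal2)
  finally have "AE x in lborel. M x \<noteq> \<infinity>"
    by (intro nn_integral_PInf_AE) auto
  then show ?thesis
  proof eventually_elim
    case (elim x)
    have "summable (\<lambda>k. 2^k * (cmod (h k x))\<^sup>2)"
      using elim unfolding M_def by (intro summable_suminf_not_top) auto
    then have "summable (\<lambda>k. (2^k * (cmod (h k x))\<^sup>2 + (1/2)^k) / 2)"
      by (intro summable_divide summable_add) auto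
    moreover have "norm (norm (h k x)) \<le> (2^k * (cmod (h k x))\<^sup>2 + (1/2)^k) / 2" for k
      using abs_le_pow2_square[of "cmod (h k x)" k] by simp
    ultimately have "summable (\<lambda>k. norm (h k x))"
      by (rule summable_comparison_test'[of _ 0])
    then have "convergent (\<lambda>n. (\<Sum>k<n. h k x) + f 0 x)"
      by (intro convergent_add convergent_const)
        (simp add: summable_iff_convergent[symmetric] summable_norm_cancel)
    moreover have "(\<Sum>k<n. h k x) + f 0 x = f n x" for n
      unfolding h_def by (subst sum_lessThan_telescope) simp
    ultimately show ?case by simp
  qed
qed

lemma L2_norm_sq_le_of_AE_tendsto:
  fixes f :: "nat \<Rightarrow> real \<Rightarrow> complex"
  assumes [measurable]: "\<And>n. f n \<in> borel_measurable borel" "g \<in> borel_measurable borel"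
    and lim: "AE x in lborel. (\<lambda>n. f n x) \<longlonglongrightarrow> F x"
    and bound: "eventually (\<lambda>n. L2_norm_sq (\<lambda>x. f n x - g x) \<le> c) sequentially"
  shows "L2_norm_sq (\<lambda>x. F x - g x) \<le> c"
proof -
  define v where "v n x = ennreal ((cmod (f n x - g x))\<^sup>2)" for n x
  have v_measurable: "v n \<in> borel_measurable lborel" for n unfolding v_def by measurable
  have "L2_norm_sq (\<lambda>x. F x - g x) = (\<integral>\<^sup>+x. liminf (\<lambda>n. v n x) \<partial>lborel)"
    unfolding L2_norm_sq_def
  proof (rule nn_integral_cong_AE)
    show "AE x in lborel. ennreal ((cmod (F x - g x))\<^sup>2) = liminf (\<lambda>n. v n x)"
      using lim
    proof eventually_elim
      case (elim x)
      have "(\<lambda>n. v n x) \<longlonglongrightarrow> ennreal ((cmod (F x - g x))\<^sup>2)"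
        unfolding v_def by (intro tendsto_intros elim)
      then show ?case by (simp add: lim_imp_Liminf)
    qed
  qed
  also have "\<dots> \<le> liminf (\<lambda>n. integral\<^sup>N lborel (v n))"
    by (rule nn_integral_liminf[OF v_measurable])
  also have "\<dots> \<le> limsup (\<lambda>n. integral\<^sup>N lborel (v n))"
    by (rule Liminf_le_Limsup) simp
  also have "\<dots> \<le> c"
    using bound unfolding v_def L2_norm_sq_def by (rule Limsup_bounded)
  finally show ?thesis .
qed

lemma L2_fast_Cauchy_limit_exists:
  fixes f :: "nat \<Rightarrow> real \<Rightarrow> complex"
  assumes [measurable]: "\<And>n. f n \<in> borel_measurable borel"
    and Cauchy: "\<And>j n. j \<le> n \<Longrightarrow> L2_norm_sq (\<lambda>x. f n x - f j x) \<le> ennreal (d j)"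
    and d_nonneg: "\<And>k. 0 \<le> d k" and summable: "summable (\<lambda>k. 2^k * d k)"
  shows "\<exists>F. F \<in> borel_measurable borel \<and> (\<forall>j. L2_norm_sq (\<lambda>x. F x - f j x) \<le> ennreal (d j))"
proof -
  have "AE x in lborel. convergent (\<lambda>n. f n x)"
    using Cauchy d_nonneg summable by (intro AE_convergent_of_L2_fast_Cauchy) auto
  then have lim: "AE x in lborel. (\<lambda>n. f n x) \<longlonglongrightarrow> lim (\<lambda>n. f n x)"
    by eventually_elim (simp add: convergent_LIMSEQ_iff)
  have "L2_norm_sq (\<lambda>x. lim (\<lambda>n. f n x) - f j x) \<le> ennreal (d j)" for j
    by (rule L2_norm_sq_le_of_AE_tendsto[OF _ _ lim]) (auto intro: Cauchy eventually_sequentiallyI)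
  then show ?thesis by (intro exI[of _ "\<lambda>x. lim (\<lambda>n. f n x)"]) auto
qed

lemma ennreal_tendsto_0_of_eventually_le:
  fixes g :: "'a \<Rightarrow> ennreal" and c :: "nat \<Rightarrow> ennreal"
  assumes le: "\<And>j. eventually (\<lambda>x. g x \<le> c j) F" and c: "c \<longlonglongrightarrow> 0"
  shows "(g \<longlongrightarrow> 0) F"
proof (rule order_tendstoI)
  fix y :: ennreal assume "0 < y"
  then obtain j where j: "c j < y"
    using order_tendstoD(2)[OF c] by (auto simp: eventually_sequentially)
  show "eventually (\<lambda>x. g x < y) F"
    using le[of j] by eventually_elim (rule le_less_trans[OF _ j])
qed simp

lemma L2_Cauchy_limit_exists:
  fixes t :: "real \<Rightarrow> real \<Rightarrow> complex" and a :: "real \<Rightarrow> ennreal"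
  assumes [measurable]: "\<And>R. t R \<in> borel_measurable borel"
    and Cauchy: "\<And>R R'. L2_norm_sq (\<lambda>x. t R x - t R' x) \<le> a R + a R'"
    and a_lim: "(a \<longlongrightarrow> 0) at_top"
  shows "\<exists>F. F \<in> borel_measurable borel \<and> ((\<lambda>R. L2_norm_sq (\<lambda>x. F x - t R x)) \<longlongrightarrow> 0) at_top"
proof -
  define d :: "nat \<Rightarrow> real" where "d k = (1/8)^k" for k
  have d_pos: "0 < d k" for k unfolding d_def by simp
  have "eventually (\<lambda>R. a R < ennreal (d k / 2)) at_top" for k
    using a_lim d_pos[of k] by (intro order_tendstoD(2)) auto
  then obtain T where T: "\<And>k R. R \<ge> T k \<Longrightarrow> a R < ennreal (d k / 2)"
    unfolding eventually_at_top_linorder by metis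
  have a_T: "a (T k) \<le> ennreal (d j / 2)" if "j \<le> k" for j k
  proof -
    have "d k / 2 \<le> d j / 2" unfolding d_def using that by (simp add: power_decreasing)
    then show ?thesis using T[of k "T k"] by (meson ennreal_leI less_imp_le order.trans order_refl)
  qed
  have Cauchy_d: "L2_norm_sq (\<lambda>x. t R x - t R' x) \<le> ennreal (d j)"
    if "a R \<le> ennreal (d j / 2)" "a R' \<le> ennreal (d j / 2)" for R R' j
    using order.trans[OF Cauchy add_mono[OF that]] d_pos[of j]
    by (simp add: ennreal_plus[symmetric] del: ennreal_plus)
  have "(\<lambda>k. 2^k * d k) = (\<lambda>k. (1/4::real)^k)"
    unfolding d_def by (simp add: fun_eq_iff power_one_over field_simps flip: power_mult_distrib)
  then have "summable (\<lambda>k. 2^k * d k)"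
    by (simp add: summable_geometric)
  then obtain F where [measurable]: "F \<in> borel_measurable borel"
    and F_T: "\<And>j. L2_norm_sq (\<lambda>x. F x - t (T j) x) \<le> ennreal (d j)"
    using L2_fast_Cauchy_limit_exists[of "\<lambda>n. t (T n)" d] d_pos
    by (auto intro!: Cauchy_d a_T simp: less_imp_le)
  have "eventually (\<lambda>R. L2_norm_sq (\<lambda>x. F x - t R x) \<le> 2 * ennreal (d j) + 2 * ennreal (d j)) at_top"
    for j
    using eventually_ge_at_top[of "T j"]
  proof eventually_elim
    case (elim R)
    have "L2_norm_sq (\<lambda>x. F x - t R x)
        \<le> 2 * L2_norm_sq (\<lambda>x. F x - t (T j) x) + 2 * L2_norm_sq (\<lambda>x. t (T j) x - t R x)"
      by (rule L2_norm_sq_diff_triangle) auto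
    also have "\<dots> \<le> 2 * ennreal (d j) + 2 * ennreal (d j)"
      using T[OF elim] by (intro add_mono mult_left_mono F_T Cauchy_d a_T) auto
    finally show ?case .
  qed
  moreover have "(\<lambda>j. 2 * ennreal (d j) + 2 * ennreal (d j)) \<longlonglongrightarrow> 0"
  proof -
    have "(\<lambda>j. 2 * ennreal (d j) + 2 * ennreal (d j)) \<longlonglongrightarrow> 2 * ennreal 0 + 2 * ennreal 0"
      unfolding d_def by (intro tendsto_intros LIMSEQ_power_zero) auto
    then show ?thesis by simp
  qed
  ultimately have "((\<lambda>R. L2_norm_sq (\<lambda>x. F x - t R x)) \<longlongrightarrow> 0) at_top"
    by (rule ennreal_tendsto_0_of_eventually_le)
  then show ?thesis using \<open>F \<in> borel_measurable borel\<close> by blast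
qed

lemma has_fourier_L2_fourier_L2:
  assumes u: "is_L2 u"
  shows "has_fourier_L2 u (fourier_L2 u)"
proof -
  have [measurable]: "u \<in> borel_measurable borel" using u unfolding is_L2_def by simp
  define a where "a R = ennreal (2*pi) * (2 * L2_norm_sq (\<lambda>x. u x - truncate R u x))" for R
  have "L2_norm_sq (\<lambda>\<xi>. fourier_trunc u R \<xi> - fourier_trunc u R' \<xi>) \<le> a R + a R'" for R R'
  proof -
    have "L2_norm_sq (\<lambda>\<xi>. fourier_trunc u R \<xi> - fourier_trunc u R' \<xi>)
        = L2_norm_sq (fourier_integral (\<lambda>x. truncate R u x - truncate R' u x))"
      unfolding fourier_trunc_eq_fourier_integral
      by (intro arg_cong[where f=L2_norm_sq] ext fourier_integral_diff[symmetric]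
          integrable_truncate[OF u])
    also have "\<dots> \<le> ennreal (2*pi) * L2_norm_sq (\<lambda>x. truncate R u x - truncate R' u x)"
      by (intro L2_norm_sq_fourier_integral_le Bochner_Integration.integrable_diff
          integrable_truncate[OF u])
    also have "L2_norm_sq (\<lambda>x. truncate R u x - truncate R' u x)
        \<le> 2 * L2_norm_sq (\<lambda>x. truncate R u x - u x) + 2 * L2_norm_sq (\<lambda>x. u x - truncate R' u x)"
      by (rule L2_norm_sq_diff_triangle) auto
    finally show ?thesis
      unfolding a_def L2_norm_sq_diff_commute[of "truncate R u"]
      by (simp add: distrib_left mult_left_mono)
  qed
  moreover have "(a \<longlongrightarrow> ennreal (2*pi) * (2 * 0)) at_top"
    unfolding a_def
    by (intro tendsto_intros L2_norm_sq_truncate_tendsto_0[OF u]) auto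
  moreover have "fourier_trunc u R \<in> borel_measurable borel" for R
    unfolding fourier_trunc_eq_fourier_integral by measurable
  ultimately obtain F where "has_fourier_L2 u F"
    unfolding has_fourier_L2_def L2_norm_sq_def[symmetric]
    using L2_Cauchy_limit_exists[of "fourier_trunc u" a] by auto
  then show ?thesis unfolding fourier_L2_def by (rule someI[where P = "has_fourier_L2 u"])
qed

lemma borel_measurable_fourier_L2:
  "is_L2 u \<Longrightarrow> fourier_L2 u \<in> borel_measurable borel"
  using has_fourier_L2_fourier_L2 unfolding has_fourier_L2_def by simp

section \<open>Convolution with a bounded probability density\<close>

locale bounded_probability_density =
  fixes K :: "real \<Rightarrow> real" and B :: real
  assumes borel_measurable_K[measurable]: "K \<in> borel_measurable borel"
    and K_nonneg: "\<And>s. 0 \<le> K s" and K_le: "\<And>s. K s \<le> B"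
    and nn_integral_K: "(\<integral>\<^sup>+s. ennreal (K s) \<partial>lborel) = 1"
begin

lemma nn_integral_K_shift: "(\<integral>\<^sup>+x. ennreal (K (x - y)) \<partial>lborel) = 1"
  using nn_integral_shift[of "\<lambda>z. ennreal (K z)" y] nn_integral_K by simp

lemma nn_integral_K_reflect_shift: "(\<integral>\<^sup>+y. ennreal (K (x - y)) \<partial>lborel) = 1"
  using nn_integral_reflect_shift[of "\<lambda>z. ennreal (K z)" x] nn_integral_K by simp

lemma integrable_K: "integrable lborel K"
  by (rule integrableI_bounded) (auto simp: nn_integral_K K_nonneg)

lemma integrable_K_reflect_shift: "integrable lborel (\<lambda>y. K (x - y))"
  using lborel_integrable_real_affine[OF integrable_K, of "-1" x] by simp

lemma integral_K_reflect_shift: "(\<integral>y. K (x - y) \<partial>lborel) = 1"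
proof -
  have "ennreal (\<integral>y. K (x - y) \<partial>lborel) = (\<integral>\<^sup>+y. ennreal (K (x - y)) \<partial>lborel)"
    using integrable_K_reflect_shift K_nonneg by (intro nn_integral_eq_integral[symmetric]) auto
  then show ?thesis using nn_integral_K_reflect_shift by simp
qed

lemma integral_K: "integral\<^sup>L lborel K = 1"
  using nn_integral_eq_integral[OF integrable_K] K_nonneg nn_integral_K by simp

lemma norm_fourier_integral_K_le: "cmod (fourier_integral (\<lambda>s. complex_of_real (K s)) \<xi>) \<le> 1"
  using norm_fourier_integral_le[of "\<lambda>s. complex_of_real (K s)" \<xi>] integrable_K K_nonneg integral_K
  by simp

lemma borel_measurable_convolution[measurable]:
  fixes w :: "real \<Rightarrow> complex"
  assumes [measurable]: "w \<in> borel_measurable borel"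
  shows "convolution K w \<in> borel_measurable borel"
proof -
  have *: "(\<lambda>(x, y). complex_of_real (K (x - y)) * w y) \<in> borel_measurable (borel \<Otimes>\<^sub>M borel)"
    by measurable
  have "sets (borel \<Otimes>\<^sub>M lborel) = sets (borel \<Otimes>\<^sub>M (borel :: real measure))"
    by (rule sets_pair_measure_cong) simp_all
  then have "(\<lambda>(x, y). complex_of_real (K (x - y)) * w y) \<in> borel_measurable (borel \<Otimes>\<^sub>M lborel)"
    using * by (simp cong: measurable_cong_sets)
  then show ?thesis unfolding Defs.convolution_def
    by (rule lborel.borel_measurable_lebesgue_integral[of "\<lambda>x y. complex_of_real (K (x - y)) * w y",
          simplified])
qed

lemma integrable_convolution_integrand:
  fixes w :: "real \<Rightarrow> complex"
  assumes w: "is_L2 w"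
  shows "integrable lborel (\<lambda>y. complex_of_real (K (x - y)) * w y)"
proof -
  have "integrable lborel (\<lambda>y. (K (x - y))\<^sup>2)"
  proof (rule Bochner_Integration.integrable_bound[of _ "\<lambda>y. B * K (x - y)"])
    show "integrable lborel (\<lambda>y. B * K (x - y))"
      using integrable_K_reflect_shift by simp
    show "AE y in lborel. norm ((K (x - y))\<^sup>2) \<le> norm (B * K (x - y))"
      using K_nonneg K_le order.trans[OF K_nonneg K_le]
      by (auto simp: power2_eq_square intro!: mult_right_mono)
  qed simp
  then show ?thesis
    using integrable_scaleR_square_integrable[of "\<lambda>y. K (x - y)" w] w
    unfolding is_L2_def by (simp add: scaleR_conv_of_real)
qed

text \<open>Jensen's inequality for the probability measure with density K(x - y) dy.\<close>
lemma norm_convolution_sq_le: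
  fixes w :: "real \<Rightarrow> complex"
  assumes [measurable]: "w \<in> borel_measurable borel"
  shows "ennreal ((cmod (convolution K w x))\<^sup>2)
    \<le> (\<integral>\<^sup>+y. ennreal (K (x - y) * (cmod (w y))\<^sup>2) \<partial>lborel)"
proof (cases "(\<integral>\<^sup>+y. ennreal (K (x - y) * (cmod (w y))\<^sup>2) \<partial>lborel) = \<infinity>
    \<or> \<not> integrable lborel (\<lambda>y. complex_of_real (K (x - y)) * w y)")
  case True
  then show ?thesis by (auto simp: Defs.convolution_def not_integrable_integral_eq)
next
  case False
  define g where "g y = K (x - y)" for y
  have [measurable]: "g \<in> borel_measurable borel" unfolding g_def by measurable
  have g_nonneg: "0 \<le> g y" for y unfolding g_def by (rule K_nonneg)
  have g_int: "integrable lborel g" unfolding g_def by (rule integrable_K_reflect_shift)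
  have sq_int: "integrable lborel (\<lambda>y. g y * (cmod (w y))\<^sup>2)"
    using False g_nonneg
    by (intro integrableI_bounded) (auto simp: g_def top.not_eq_extremum abs_mult)
  have norm_int: "integrable lborel (\<lambda>y. g y * cmod (w y))"
    using integrable_norm[of lborel "\<lambda>y. complex_of_real (K (x - y)) * w y"] False g_nonneg
    by (simp add: g_def norm_mult)
  define m where "m = (\<integral>y. g y * cmod (w y) \<partial>lborel)"
  define I where "I = (\<integral>y. g y * (cmod (w y))\<^sup>2 \<partial>lborel)"
  have "0 \<le> (\<integral>y. g y * (cmod (w y) - m)\<^sup>2 \<partial>lborel)"
    using g_nonneg by (intro integral_nonneg_AE) auto
  also have "(\<lambda>y. g y * (cmod (w y) - m)\<^sup>2)
      = (\<lambda>y. (g y * (cmod (w y))\<^sup>2 - (2*m) * (g y * cmod (w y))) + m\<^sup>2 * g y)"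
    by (auto simp: fun_eq_iff power2_eq_square algebra_simps)
  also have "(\<integral>y. (g y * (cmod (w y))\<^sup>2 - (2*m) * (g y * cmod (w y))) + m\<^sup>2 * g y \<partial>lborel)
      = I - 2*m*m + m\<^sup>2"
    using norm_int sq_int g_int integral_K_reflect_shift unfolding I_def m_def g_def
    by (simp add: Bochner_Integration.integral_add Bochner_Integration.integral_diff)
  finally have "m\<^sup>2 \<le> I" by (simp add: power2_eq_square)
  moreover have "cmod (convolution K w x) \<le> m"
    unfolding Defs.convolution_def m_def
    by (rule order.trans[OF integral_norm_bound]) (simp add: norm_mult g_def K_nonneg)
  ultimately have "(cmod (convolution K w x))\<^sup>2 \<le> I"
    by (meson norm_ge_zero order.trans power_mono)
  then have "ennreal ((cmod (convolution K w x))\<^sup>2) \<le> ennreal I"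
    by (rule ennreal_leI)
  also have "ennreal I = (\<integral>\<^sup>+y. ennreal (K (x - y) * (cmod (w y))\<^sup>2) \<partial>lborel)"
    unfolding I_def using sq_int g_nonneg by (subst nn_integral_eq_integral) (auto simp: g_def)
  finally show ?thesis .
qed

lemma L2_norm_sq_convolution_le:
  fixes w :: "real \<Rightarrow> complex"
  assumes [measurable]: "w \<in> borel_measurable borel"
  shows "L2_norm_sq (convolution K w) \<le> L2_norm_sq w"
proof -
  have "L2_norm_sq (convolution K w)
      \<le> (\<integral>\<^sup>+x. \<integral>\<^sup>+y. ennreal (K (x - y) * (cmod (w y))\<^sup>2) \<partial>lborel \<partial>lborel)"
    unfolding L2_norm_sq_def by (intro nn_integral_mono norm_convolution_sq_le) simp
  also have "\<dots> = (\<integral>\<^sup>+y. \<integral>\<^sup>+x. ennreal (K (x - y) * (cmod (w y))\<^sup>2) \<partial>lborel \<partial>lborel)"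
    by (rule lborel_pair.Fubini'[symmetric]) measurable
  also have "\<dots> = (\<integral>\<^sup>+y. ennreal ((cmod (w y))\<^sup>2) * (\<integral>\<^sup>+x. ennreal (K (x - y)) \<partial>lborel) \<partial>lborel)"
    by (intro nn_integral_cong, subst nn_integral_cmult[symmetric])
      (auto intro!: nn_integral_cong simp: ennreal_mult[symmetric] K_nonneg mult.commute)
  also have "\<dots> = L2_norm_sq w"
    unfolding L2_norm_sq_def nn_integral_K_shift by simp
  finally show ?thesis .
qed

lemma integrable_pair_convolution_kernel:
  fixes w :: "real \<Rightarrow> complex"
  assumes w: "integrable lborel w"
  shows "integrable (lborel \<Otimes>\<^sub>M lborel) (\<lambda>(x, y). K (x - y) * cmod (w y))"
proof (rule integrableI_bounded)
  have [measurable]: "w \<in> borel_measurable borel" using w by auto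
  show "(\<lambda>(x, y). K (x - y) * cmod (w y)) \<in> borel_measurable (lborel \<Otimes>\<^sub>M lborel)" by measurable
  have "(\<integral>\<^sup>+p. ennreal (norm ((\<lambda>(x, y). K (x - y) * cmod (w y)) p)) \<partial>(lborel \<Otimes>\<^sub>M lborel))
      = (\<integral>\<^sup>+x. \<integral>\<^sup>+y. ennreal (K (x - y) * cmod (w y)) \<partial>lborel \<partial>lborel)"
    by (subst lborel.nn_integral_fst[symmetric]) (auto simp: K_nonneg abs_mult)
  also have "\<dots> = (\<integral>\<^sup>+y. \<integral>\<^sup>+x. ennreal (K (x - y) * cmod (w y)) \<partial>lborel \<partial>lborel)"
    by (rule lborel_pair.Fubini'[symmetric]) measurable
  also have "\<dots> = (\<integral>\<^sup>+y. ennreal (cmod (w y)) * (\<integral>\<^sup>+x. ennreal (K (x - y)) \<partial>lborel) \<partial>lborel)"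
    by (intro nn_integral_cong, subst nn_integral_cmult[symmetric])
      (auto intro!: nn_integral_cong simp: ennreal_mult[symmetric] K_nonneg mult.commute)
  also have "\<dots> = (\<integral>\<^sup>+y. ennreal (cmod (w y)) \<partial>lborel)"
    unfolding nn_integral_K_shift by simp
  also have "\<dots> < \<infinity>" using w unfolding integrable_iff_bounded by simp
  finally show "(\<integral>\<^sup>+p. ennreal (norm ((\<lambda>(x, y). K (x - y) * cmod (w y)) p)) \<partial>(lborel \<Otimes>\<^sub>M lborel))
      < \<infinity>" .
qed

lemma integrable_convolution:
  fixes w :: "real \<Rightarrow> complex"
  assumes w: "integrable lborel w"
  shows "integrable lborel (convolution K w)"
proof (rule integrableI_bounded)
  have [measurable]: "w \<in> borel_measurable borel" using w by auto
  show "convolution K w \<in> borel_measurable lborel" by simp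
  have "(\<integral>\<^sup>+x. ennreal (norm (convolution K w x)) \<partial>lborel)
      \<le> (\<integral>\<^sup>+x. \<integral>\<^sup>+y. ennreal (K (x - y) * cmod (w y)) \<partial>lborel \<partial>lborel)"
    unfolding Defs.convolution_def
    by (intro nn_integral_mono order.trans[OF norm_integral_le_nn_integral])
      (simp add: norm_mult K_nonneg)
  also have "\<dots> = (\<integral>\<^sup>+p. ennreal (norm ((\<lambda>(x, y). K (x - y) * cmod (w y)) p)) \<partial>(lborel \<Otimes>\<^sub>M lborel))"
    by (subst lborel.nn_integral_fst[symmetric]) (auto simp: K_nonneg abs_mult)
  also have "\<dots> < \<infinity>"
    using integrable_pair_convolution_kernel[OF w] unfolding integrable_iff_bounded by simp
  finally show "(\<integral>\<^sup>+x. ennreal (norm (convolution K w x)) \<partial>lborel) < \<infinity>" .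
qed

lemma fourier_integral_convolution:
  fixes w :: "real \<Rightarrow> complex"
  assumes w: "integrable lborel w"
  shows "fourier_integral (convolution K w) \<xi>
    = fourier_integral (\<lambda>s. complex_of_real (K s)) \<xi> * fourier_integral w \<xi>"
proof -
  have [measurable]: "w \<in> borel_measurable borel" using w by auto
  define \<Phi> where "\<Phi> x y = cis (-(x*\<xi>)) * (complex_of_real (K (x - y)) * w y)" for x y
  have "integrable (lborel \<Otimes>\<^sub>M lborel) (case_prod \<Phi>)"
  proof (rule Bochner_Integration.integrable_bound[OF integrable_pair_convolution_kernel[OF w]])
    show "case_prod \<Phi> \<in> borel_measurable (lborel \<Otimes>\<^sub>M lborel)" unfolding \<Phi>_def by measurable
    show "AE p in lborel \<Otimes>\<^sub>M lborel. norm (case_prod \<Phi> p) \<le> norm ((\<lambda>(x, y). K (x - y) * cmod (w y)) p)"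
      by (rule AE_I2) (auto simp: \<Phi>_def norm_mult K_nonneg abs_mult split: prod.splits)
  qed
  then have "fourier_integral (convolution K w) \<xi> = (\<integral>y. (\<integral>x. \<Phi> x y \<partial>lborel) \<partial>lborel)"
    unfolding fourier_integral_def Defs.convolution_def \<Phi>_def
    by (simp add: lborel_pair.Fubini_integral)
  also have "\<dots> = (\<integral>y. fourier_integral (\<lambda>s. complex_of_real (K s)) \<xi> * (cis (-(y*\<xi>)) * w y) \<partial>lborel)"
  proof (rule Bochner_Integration.integral_cong[OF refl])
    fix y
    have "(\<integral>x. \<Phi> x y \<partial>lborel) = (\<integral>z. \<Phi> (y + 1 * z) y \<partial>lborel)"
      using lborel_integral_real_affine[where f = "\<lambda>x. \<Phi> x y" and c = 1 and t = y] by simp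
    also have "\<dots> = (\<integral>z. (cis (-(y*\<xi>)) * w y) * (cis (-(z*\<xi>)) * complex_of_real (K z)) \<partial>lborel)"
    proof -
      have "cis (-((y + 1 * z)*\<xi>)) = cis (-(y*\<xi>)) * cis (-(z*\<xi>))" for z
        by (simp add: cis_mult algebra_simps)
      then show ?thesis unfolding \<Phi>_def by (simp add: ac_simps)
    qed
    finally show "(\<integral>x. \<Phi> x y \<partial>lborel)
        = fourier_integral (\<lambda>s. complex_of_real (K s)) \<xi> * (cis (-(y*\<xi>)) * w y)"
      unfolding fourier_integral_def by (simp add: mult.commute)
  qed
  also have "\<dots> = fourier_integral (\<lambda>s. complex_of_real (K s)) \<xi> * fourier_integral w \<xi>"
    unfolding fourier_integral_def by simp
  finally show ?thesis .
qed

lemma convolution_diff: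
  fixes f g :: "real \<Rightarrow> complex"
  assumes "is_L2 f" and "is_L2 g"
  shows "convolution K f x - convolution K g x = convolution K (\<lambda>y. f y - g y) x"
  unfolding Defs.convolution_def
  using integrable_convolution_integrand[OF assms(1), of x] integrable_convolution_integrand[OF assms(2), of x]
  by (simp add: right_diff_distrib)

lemma is_L2_convolution:
  assumes "is_L2 u"
  shows "is_L2 (convolution K u)"
  using assms L2_norm_sq_convolution_le[of u] unfolding is_L2_iff by auto

lemma L2_norm_sq_convolution_truncate_le:
  assumes u: "is_L2 u"
  defines "v \<equiv> convolution K u"
  shows "L2_norm_sq (\<lambda>x. convolution K (truncate R u) x - truncate R v x)
    \<le> 2 * L2_norm_sq (\<lambda>x. u x - truncate R u x) + 2 * L2_norm_sq (\<lambda>x. v x - truncate R v x)"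
proof -
  have [measurable]: "u \<in> borel_measurable borel" using u unfolding is_L2_def by simp
  have "L2_norm_sq (\<lambda>x. convolution K (truncate R u) x - truncate R v x)
      \<le> 2 * L2_norm_sq (\<lambda>x. convolution K (truncate R u) x - v x)
        + 2 * L2_norm_sq (\<lambda>x. v x - truncate R v x)"
    unfolding v_def by (rule L2_norm_sq_diff_triangle) auto
  also have "L2_norm_sq (\<lambda>x. convolution K (truncate R u) x - v x)
      = L2_norm_sq (convolution K (\<lambda>x. u x - truncate R u x))"
    unfolding v_def L2_norm_sq_diff_commute[of "convolution K (truncate R u)"]
    using convolution_diff[OF u is_L2_truncate[OF u]] by simp
  also have "\<dots> \<le> L2_norm_sq (\<lambda>x. u x - truncate R u x)"
    by (rule L2_norm_sq_convolution_le) simp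
  finally show ?thesis by (simp add: mult_left_mono add_right_mono)
qed

text \<open>The truncated transform of u is compared with that of K * u through the transform of
  K * (truncate R u), which is m times the truncated transform of u.\<close>
lemma L2_norm_sq_multiplier_fourier_trunc_le:
  assumes u: "is_L2 u"
  defines "v \<equiv> convolution K u" and "m \<equiv> fourier_integral (\<lambda>s. complex_of_real (K s))"
  shows "L2_norm_sq (\<lambda>\<xi>. m \<xi> * fourier_L2 u \<xi> - fourier_trunc v R \<xi>)
    \<le> 2 * L2_norm_sq (\<lambda>\<xi>. fourier_L2 u \<xi> - fourier_trunc u R \<xi>)
      + 2 * (ennreal (2*pi) * (2 * L2_norm_sq (\<lambda>x. u x - truncate R u x)
        + 2 * L2_norm_sq (\<lambda>x. v x - truncate R v x)))"
proof -
  have v: "is_L2 v" unfolding v_def by (rule is_L2_convolution[OF u])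
  have [measurable]: "u \<in> borel_measurable borel" "v \<in> borel_measurable borel"
    "fourier_L2 u \<in> borel_measurable borel" "m \<in> borel_measurable borel"
    using u v borel_measurable_fourier_L2[OF u] unfolding is_L2_def m_def by auto
  have m_le: "cmod (m \<xi>) \<le> 1" for \<xi> unfolding m_def by (rule norm_fourier_integral_K_le)
  define c where "c = convolution K (truncate R u)"
  have c_int: "integrable lborel c"
    unfolding c_def by (rule integrable_convolution[OF integrable_truncate[OF u]])
  have c_fourier: "fourier_integral c \<xi> = m \<xi> * fourier_trunc u R \<xi>" for \<xi>
    unfolding c_def m_def fourier_trunc_eq_fourier_integral
    by (rule fourier_integral_convolution[OF integrable_truncate[OF u]])
  have "L2_norm_sq (\<lambda>\<xi>. m \<xi> * fourier_L2 u \<xi> - fourier_trunc v R \<xi>)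
      \<le> 2 * L2_norm_sq (\<lambda>\<xi>. m \<xi> * fourier_L2 u \<xi> - fourier_integral c \<xi>)
        + 2 * L2_norm_sq (\<lambda>\<xi>. fourier_integral c \<xi> - fourier_trunc v R \<xi>)"
    using c_int unfolding fourier_trunc_eq_fourier_integral
    by (intro L2_norm_sq_diff_triangle) auto
  also have "L2_norm_sq (\<lambda>\<xi>. m \<xi> * fourier_L2 u \<xi> - fourier_integral c \<xi>)
      \<le> L2_norm_sq (\<lambda>\<xi>. fourier_L2 u \<xi> - fourier_trunc u R \<xi>)"
    unfolding c_fourier by (rule L2_norm_sq_mult_le[OF m_le])
  also have "L2_norm_sq (\<lambda>\<xi>. fourier_integral c \<xi> - fourier_trunc v R \<xi>)
      = L2_norm_sq (fourier_integral (\<lambda>x. c x - truncate R v x))"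
    unfolding fourier_trunc_eq_fourier_integral
    by (intro arg_cong[where f = L2_norm_sq] ext fourier_integral_diff[symmetric] c_int
        integrable_truncate[OF v])
  also have "\<dots> \<le> ennreal (2*pi) * L2_norm_sq (\<lambda>x. c x - truncate R v x)"
    by (intro L2_norm_sq_fourier_integral_le Bochner_Integration.integrable_diff c_int
        integrable_truncate[OF v])
  also have "L2_norm_sq (\<lambda>x. c x - truncate R v x)
      \<le> 2 * L2_norm_sq (\<lambda>x. u x - truncate R u x) + 2 * L2_norm_sq (\<lambda>x. v x - truncate R v x)"
    unfolding c_def v_def by (rule L2_norm_sq_convolution_truncate_le[OF u])
  finally show ?thesis
    by (simp add: add_mono mult_left_mono)
qed

theorem fourier_L2_convolution:
  assumes u: "is_L2 u"
  shows "AE \<xi> in lborel. fourier_L2 (convolution K u) \<xi>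
    = fourier_integral (\<lambda>s. complex_of_real (K s)) \<xi> * fourier_L2 u \<xi>"
proof -
  define v where "v = convolution K u"
  define m where "m = fourier_integral (\<lambda>s. complex_of_real (K s))"
  have v: "is_L2 v" unfolding v_def by (rule is_L2_convolution[OF u])
  have [measurable]: "u \<in> borel_measurable borel" "v \<in> borel_measurable borel"
    "m \<in> borel_measurable borel" "fourier_L2 u \<in> borel_measurable borel"
    "fourier_L2 v \<in> borel_measurable borel"
    using u v borel_measurable_fourier_L2[OF u] borel_measurable_fourier_L2[OF v]
    unfolding is_L2_def m_def by auto
  define b where "b R = 2 * L2_norm_sq (\<lambda>\<xi>. fourier_L2 u \<xi> - fourier_trunc u R \<xi>)
    + 2 * (ennreal (2*pi) * (2 * L2_norm_sq (\<lambda>x. u x - truncate R u x)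
      + 2 * L2_norm_sq (\<lambda>x. v x - truncate R v x)))" for R
  have bound: "L2_norm_sq (\<lambda>\<xi>. m \<xi> * fourier_L2 u \<xi> - fourier_trunc v R \<xi>) \<le> b R" for R
    unfolding b_def m_def v_def by (rule L2_norm_sq_multiplier_fourier_trunc_le[OF u])
  have "(b \<longlongrightarrow> 2 * 0 + 2 * (ennreal (2*pi) * (2 * 0 + 2 * 0))) at_top"
    using has_fourier_L2_fourier_L2[OF u]
    unfolding b_def has_fourier_L2_def L2_norm_sq_def[symmetric]
    by (intro tendsto_intros L2_norm_sq_truncate_tendsto_0 u v) auto
  then have b_lim: "(b \<longlongrightarrow> 0) at_top" by simp
  have "((\<lambda>R. L2_norm_sq (\<lambda>\<xi>. m \<xi> * fourier_L2 u \<xi> - fourier_trunc v R \<xi>)) \<longlongrightarrow> 0) at_top"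
    by (rule tendsto_sandwich[OF _ _ tendsto_const b_lim]) (simp_all add: bound)
  then show ?thesis
    using has_fourier_L2_fourier_L2[OF v]
    unfolding has_fourier_L2_def L2_norm_sq_def[symmetric] v_def[symmetric] m_def[symmetric]
    by (intro L2_limit_unique_AE[where t = "fourier_trunc v"])
      (auto simp: fourier_trunc_eq_fourier_integral)
qed

end

section \<open>The exponential kernel\<close>

lemma bounded_probability_density_exponential_density:
  assumes b: "0 < b"
  shows "bounded_probability_density (exponential_density b) b"
proof
  show "exponential_density b \<in> borel_measurable borel"
    by (simp add: exponential_density_def)
  show "0 \<le> exponential_density b s" for s
    using b by (rule exponential_density_nonneg)
  show "exponential_density b s \<le> b" for s
    using b by (auto simp: exponential_density_def intro: mult_left_le)
  interpret prob_space "density lborel (exponential_density b)"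
    by (rule prob_space_exponential_density[OF b])
  have "emeasure (density lborel (exponential_density b)) UNIV = 1"
    using emeasure_space_1 by simp
  then show "(\<integral>\<^sup>+s. ennreal (exponential_density b s) \<partial>lborel) = 1"
    by (simp add: emeasure_density)
qed

lemma integral_exponential_density_cis_Icc:
  fixes b R \<xi> :: real
  assumes b: "0 < b" and R: "0 \<le> R"
  defines "c \<equiv> complex_of_real b + \<i> * complex_of_real \<xi>"
  shows "(\<integral>s. indicator {0..R} s *\<^sub>R (cis (-(s*\<xi>)) * complex_of_real (exponential_density b s)) \<partial>lborel)
    = of_real b * (1 - exp (-(c * of_real R))) / c"
proof -
  have c: "c \<noteq> 0" unfolding c_def using b by (auto simp: complex_eq_iff)
  define F where "F s = - (of_real b / c) * exp (-(c * of_real s))" for s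
  define f where "f s = of_real b * exp (-(c * of_real s))" for s
  have "(\<integral>s. indicator {0..R} s *\<^sub>R (cis (-(s*\<xi>)) * complex_of_real (exponential_density b s)) \<partial>lborel)
      = (\<integral>s. indicator {0..R} s *\<^sub>R f s \<partial>lborel)"
    by (intro Bochner_Integration.integral_cong)
      (auto simp: f_def c_def exponential_density_def indicator_def cis_conv_exp
        exp_add[symmetric] algebra_simps simp flip: exp_of_real)
  also have "\<dots> = (LBINT s=ereal 0..ereal R. f s)"
    using interval_integral_Icc[OF R, of f] by (simp add: set_lebesgue_integral_def)
  also have "\<dots> = F R - F 0"
  proof (rule interval_integral_FTC_finite)
    show "continuous_on {min 0 R..max 0 R} f" unfolding f_def by (intro continuous_intros)
    fix x
    have "((\<lambda>z. - (of_real b / c) * exp (-(c * z))) has_field_derivative f x) (at (of_real x))"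
      unfolding f_def using c by (auto intro!: derivative_eq_intros simp: field_simps)
    then show "(F has_vector_derivative f x) (at x within {min 0 R..max 0 R})"
      unfolding F_def by (rule has_vector_derivative_real_field)
  qed
  also have "\<dots> = of_real b * (1 - exp (-(c * of_real R))) / c"
    unfolding F_def using c by (simp add: field_simps)
  finally show ?thesis .
qed

lemma tendsto_integral_indicator_Icc_at_top:
  fixes g :: "real \<Rightarrow> complex"
  assumes g: "integrable lborel g" and vanishing: "\<And>s. s < 0 \<Longrightarrow> g s = 0"
  shows "((\<lambda>R. \<integral>s. indicator {0..R} s *\<^sub>R g s \<partial>lborel) \<longlongrightarrow> (\<integral>s. g s \<partial>lborel)) at_top"
proof -
  have [measurable]: "g \<in> borel_measurable borel" using g by auto
  have "AE s in lborel. ((\<lambda>R. indicator {0..R} s *\<^sub>R g s) \<longlongrightarrow> g s) at_top"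
  proof (rule AE_I2)
    fix s
    have "eventually (\<lambda>R. indicator {0..R} s *\<^sub>R g s = g s) at_top"
      using eventually_ge_at_top[of s]
      by eventually_elim (auto simp: indicator_def vanishing)
    then show "((\<lambda>R. indicator {0..R} s *\<^sub>R g s) \<longlongrightarrow> g s) at_top"
      by (rule tendsto_eventually)
  qed
  moreover have "\<forall>\<^sub>F R in at_top. AE s in lborel. norm (indicator {0..R} s *\<^sub>R g s) \<le> norm (g s)"
    by (auto simp: indicator_def)
  ultimately show ?thesis
    by (intro integral_dominated_convergence_at_top[where w = "\<lambda>s. norm (g s)"]) (auto intro: g)
qed

lemma fourier_integral_exponential_density:
  assumes b: "0 < b"
  shows "fourier_integral (\<lambda>s. complex_of_real (exponential_density b s)) \<xi>
    = complex_of_real b / (complex_of_real b + \<i> * complex_of_real \<xi>)"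
proof -
  interpret bounded_probability_density "exponential_density b" b
    by (rule bounded_probability_density_exponential_density[OF b])
  define c where "c = complex_of_real b + \<i> * complex_of_real \<xi>"
  have c: "c \<noteq> 0" unfolding c_def using b by (auto simp: complex_eq_iff)
  define g where "g s = cis (-(s*\<xi>)) * complex_of_real (exponential_density b s)" for s
  have [measurable]: "g \<in> borel_measurable borel"
    unfolding g_def by measurable
  have "integrable lborel g"
    unfolding g_def using integrable_K
    by (rule Bochner_Integration.integrable_bound) (auto simp: norm_mult K_nonneg)
  then have "((\<lambda>R. \<integral>s. indicator {0..R} s *\<^sub>R g s \<partial>lborel) \<longlongrightarrow> (\<integral>s. g s \<partial>lborel)) at_top"
    by (rule tendsto_integral_indicator_Icc_at_top) (simp add: g_def exponential_density_def)
  moreover have "((\<lambda>R. \<integral>s. indicator {0..R} s *\<^sub>R g s \<partial>lborel) \<longlongrightarrow> of_real b * (1 - 0) / c) at_top"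
  proof (rule Lim_transform_eventually)
    have "((\<lambda>R. norm (exp (-(c * of_real R)))) \<longlongrightarrow> 0) at_top"
    proof -
      have "filterlim (\<lambda>R. -(b * R)) at_bot at_top"
        using filterlim_tendsto_pos_mult_at_top[OF tendsto_const b filterlim_ident]
        by (simp add: filterlim_uminus_at_top)
      then show ?thesis
        by (simp add: norm_exp_eq_Re c_def filterlim_compose[OF exp_at_bot])
    qed
    then have "((\<lambda>R. exp (-(c * of_real R))) \<longlongrightarrow> 0) at_top"
      by (rule tendsto_norm_zero_cancel)
    then show "((\<lambda>R. of_real b * (1 - exp (-(c * of_real R))) / c) \<longlongrightarrow> of_real b * (1 - 0) / c) at_top"
      by (intro tendsto_intros c)
    show "eventually (\<lambda>R. of_real b * (1 - exp (-(c * of_real R))) / c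
        = (\<integral>s. indicator {0..R} s *\<^sub>R g s \<partial>lborel)) at_top"
      using eventually_ge_at_top[of 0]
      by eventually_elim (simp add: g_def c_def integral_exponential_density_cis_Icc[OF b])
  qed
  ultimately have "(\<integral>s. g s \<partial>lborel) = of_real b * (1 - 0) / c"
    by (rule tendsto_unique[rotated]) simp
  then show ?thesis unfolding fourier_integral_def g_def c_def by simp
qed

lemma norm_fourier_integral_exponential_density_sq:
  assumes "0 < b"
  shows "(cmod (fourier_integral (\<lambda>s. complex_of_real (exponential_density b s)) \<xi>))\<^sup>2
    = b\<^sup>2 / (b\<^sup>2 + \<xi>\<^sup>2)"
proof -
  have "(cmod (complex_of_real b + \<i> * complex_of_real \<xi>))\<^sup>2 = b\<^sup>2 + \<xi>\<^sup>2"
    by (simp add: cmod_power2)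
  then show ?thesis
    unfolding fourier_integral_exponential_density[OF assms]
    by (simp only: norm_divide power_divide norm_of_real power2_abs)
qed

lemma G_kernel_eq_exponential_density: "G_kernel \<beta> \<alpha> = exponential_density (\<beta>/\<alpha>)"
  unfolding G_kernel_def exponential_density_def by (auto simp: fun_eq_iff field_simps)

lemma powr_le_one_plus_sq:
  fixes t e :: real
  assumes "0 \<le> t" "0 \<le> e" "e \<le> 2"
  shows "t powr e \<le> 1 + t\<^sup>2"
proof (cases "t \<le> 1")
  case True
  then have "t powr e \<le> 1 powr e" using assms by (intro powr_mono2) auto
  then show ?thesis by (simp add: add_increasing2)
next
  case False
  then have "t powr e \<le> t powr 2" using assms by (intro powr_mono) auto
  then show ?thesis using False by (simp add: powr_numeral)
qed

lemma powr_le_max_one_sq: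
  fixes \<beta> e :: real
  assumes "0 \<le> \<beta>" "0 \<le> e" "e \<le> 2"
  shows "\<beta> powr e \<le> (max 1 \<beta>)\<^sup>2"
proof -
  have "\<beta> powr e \<le> (max 1 \<beta>) powr e" using assms by (intro powr_mono2) auto
  also have "\<dots> \<le> (max 1 \<beta>) powr 2" using assms by (intro powr_mono) auto
  finally show ?thesis by (simp add: powr_numeral)
qed

lemma abs_mult_Lorentzian_le:
  fixes b \<epsilon> \<xi> :: real
  assumes b: "0 < b" and \<epsilon>: "0 \<le> \<epsilon>" "\<epsilon> \<le> 1"
  shows "\<bar>\<xi>\<bar> * (b\<^sup>2 / (b\<^sup>2 + \<xi>\<^sup>2)) \<le> b powr (2*\<epsilon>) * \<bar>\<xi>\<bar> powr (1 - 2*\<epsilon>)"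
proof (cases "\<xi> = 0")
  case False
  define t where "t = \<bar>\<xi>\<bar> / b"
  have t: "0 < t" unfolding t_def using False b by simp
  have "\<bar>\<xi>\<bar> * (b\<^sup>2 / (b\<^sup>2 + \<xi>\<^sup>2)) = \<bar>\<xi>\<bar> / (1 + t\<^sup>2)"
    unfolding t_def using b by (simp add: field_simps power2_abs)
  also have "\<dots> = b powr (2*\<epsilon>) * \<bar>\<xi>\<bar> powr (1 - 2*\<epsilon>) * (t powr (2*\<epsilon>) / (1 + t\<^sup>2))"
  proof -
    have "b powr (2*\<epsilon>) * \<bar>\<xi>\<bar> powr (1 - 2*\<epsilon>) * t powr (2*\<epsilon>) = \<bar>\<xi>\<bar>"
      unfolding t_def using b False by (simp add: powr_divide powr_add[symmetric])
    then show ?thesis by (simp only: times_divide_eq_right)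
  qed
  also have "\<dots> \<le> b powr (2*\<epsilon>) * \<bar>\<xi>\<bar> powr (1 - 2*\<epsilon>) * 1"
    using powr_le_one_plus_sq[of t "2*\<epsilon>"] t \<epsilon>
    by (intro mult_left_mono) (auto simp: divide_le_eq add_pos_nonneg)
  finally show ?thesis by simp
qed simp

lemma G_kernel_multiplier_le:
  fixes \<beta> \<alpha> \<epsilon> \<xi> :: real
  assumes \<beta>: "0 < \<beta>" and \<alpha>: "0 < \<alpha>" and \<epsilon>: "0 \<le> \<epsilon>" "\<epsilon> \<le> 1"
  shows "\<bar>\<xi>\<bar> powr (2 * (1/2)) * (cmod (fourier_integral (\<lambda>s. complex_of_real (G_kernel \<beta> \<alpha> s)) \<xi>))\<^sup>2
    \<le> (max 1 \<beta> * \<alpha> powr (- \<epsilon>))\<^sup>2 * \<bar>\<xi>\<bar> powr (2 * (1/2 - \<epsilon>))"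
proof -
  have "\<bar>\<xi>\<bar> powr (2 * (1/2)) * (cmod (fourier_integral (\<lambda>s. complex_of_real (G_kernel \<beta> \<alpha> s)) \<xi>))\<^sup>2
      = \<bar>\<xi>\<bar> * ((\<beta>/\<alpha>)\<^sup>2 / ((\<beta>/\<alpha>)\<^sup>2 + \<xi>\<^sup>2))"
    using \<alpha> \<beta> by (simp add: G_kernel_eq_exponential_density norm_fourier_integral_exponential_density_sq)
  also have "\<dots> \<le> (\<beta>/\<alpha>) powr (2*\<epsilon>) * \<bar>\<xi>\<bar> powr (1 - 2*\<epsilon>)"
    using \<alpha> \<beta> \<epsilon> by (intro abs_mult_Lorentzian_le) auto
  also have "(\<beta>/\<alpha>) powr (2*\<epsilon>) = \<beta> powr (2*\<epsilon>) * \<alpha> powr (- (2*\<epsilon>))"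
    using \<alpha> \<beta> by (simp add: powr_divide powr_minus_divide)
  also have "\<dots> \<le> (max 1 \<beta>)\<^sup>2 * \<alpha> powr (- (2*\<epsilon>))"
    using \<beta> \<epsilon> by (intro mult_right_mono powr_le_max_one_sq) auto
  also have "\<dots> = (max 1 \<beta> * \<alpha> powr (- \<epsilon>))\<^sup>2"
    using \<alpha> by (simp add: power_mult_distrib power2_eq_square powr_add[symmetric])
  finally show ?thesis by (simp add: right_diff_distrib mult_right_mono)
qed

lemma Hs_seminorm_sq_le_of_fourier_multiplier:
  assumes multiplier: "AE \<xi> in lborel. fourier_L2 v \<xi> = m \<xi> * fourier_L2 u \<xi>"
    and bound: "\<And>\<xi>. \<bar>\<xi>\<bar> powr (2 * s) * (cmod (m \<xi>))\<^sup>2 \<le> c * \<bar>\<xi>\<bar> powr (2 * t)"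
    and [measurable]: "fourier_L2 u \<in> borel_measurable borel"
    and "0 \<le> c"
  shows "Hs_seminorm_sq s v \<le> ennreal c * Hs_seminorm_sq t u"
proof -
  have "Hs_seminorm_sq s v
      = (\<integral>\<^sup>+\<xi>. ennreal ((\<bar>\<xi>\<bar> powr (2 * s) * (cmod (m \<xi>))\<^sup>2) * (cmod (fourier_L2 u \<xi>))\<^sup>2) \<partial>lborel)"
    unfolding Hs_seminorm_sq_def
    by (rule nn_integral_cong_AE) (use multiplier in \<open>auto simp: norm_mult power_mult_distrib mult.assoc\<close>)
  also have "\<dots> \<le> (\<integral>\<^sup>+\<xi>. ennreal c * ennreal (\<bar>\<xi>\<bar> powr (2 * t) * (cmod (fourier_L2 u \<xi>))\<^sup>2) \<partial>lborel)"
    using bound \<open>0 \<le> c\<close>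
    by (intro nn_integral_mono) (simp add: ennreal_mult[symmetric] mult.assoc[symmetric] ennreal_leI mult_right_mono)
  also have "\<dots> = ennreal c * Hs_seminorm_sq t u"
    unfolding Hs_seminorm_sq_def by (rule nn_integral_cmult) measurable
  finally show ?thesis .
qed

theorem proposition5:
  fixes \<beta> :: real
  assumes "\<beta> > 0"
  shows "\<exists>C>0. \<exists>\<epsilon>0. 0 < \<epsilon>0 \<and> \<epsilon>0 < 1/2 \<and>
    (\<forall>\<alpha>>0. \<forall>\<epsilon>. 0 < \<epsilon> \<and> \<epsilon> < \<epsilon>0 \<longrightarrow>
      (\<forall>u. in_Hs (1/2 - \<epsilon>) u \<longrightarrow>
        Hs_seminorm_sq (1/2) (convolution (G_kernel \<beta> \<alpha>) u)
          \<le> ennreal ((C * \<alpha> powr (- \<epsilon>))\<^sup>2) * Hs_seminorm_sq (1/2 - \<epsilon>) u))"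
proof -
  have "Hs_seminorm_sq (1/2) (convolution (G_kernel \<beta> \<alpha>) u)
      \<le> ennreal ((max 1 \<beta> * \<alpha> powr (- \<epsilon>))\<^sup>2) * Hs_seminorm_sq (1/2 - \<epsilon>) u"
    if \<alpha>: "\<alpha> > 0" and \<epsilon>: "0 < \<epsilon>" "\<epsilon> < 1/4" and "in_Hs (1/2 - \<epsilon>) u" for \<alpha> \<epsilon> u
  proof -
    have u: "is_L2 u" using \<open>in_Hs (1/2 - \<epsilon>) u\<close> unfolding in_Hs_def by simp
    interpret bounded_probability_density "G_kernel \<beta> \<alpha>" "\<beta>/\<alpha>"
      unfolding G_kernel_eq_exponential_density
      using \<alpha> assms by (intro bounded_probability_density_exponential_density) simp
    show ?thesis
      using fourier_L2_convolution[OF u] G_kernel_multiplier_le[OF assms \<alpha>] \<epsilon>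
      by (intro Hs_seminorm_sq_le_of_fourier_multiplier borel_measurable_fourier_L2 u) auto
  qed
  then show ?thesis
    by (intro exI[of _ "max 1 \<beta>"] conjI exI[of _ "1/4::real"]) auto
qed

end
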